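(* Let $(M,\mathcal F)$ be transversely Hessian with foliated Hessian structure $(D,g)$ and second normal Koszul form $\beta$. For any adapted foliated affine coordinate system $(x^1,\dots,x^p,y^1,\dots,y^q)$, let $\mathbf R^N_{i\bar j}$ ($i,j=1,\dots,q$) be the components of the normal Ricci tensor of the normal Kählerian metric $g^N$ of the foliated manifold $(N(M,\mathcal F),\mathcal F^N)$ with respect to the complex coordinates $z^i,\bar z^j$. Then $\mathbf R^N_{i\bar j}=-\frac12\beta_{ij}\circ\pi$, where $\pi:N(M,\mathcal F)\to M$ is the projection.
   Context: $N(M,\mathcal F)=TM/T\mathcal F$, $\mathcal F$ of codimension $q$. $(D,g)$: $D$ a flat torsion-free foliated connection in the normal bundle (adapted foliated affine coordinates: adapted charts with affine transverse coordinate changes and $\overline{\partial/\partial y^i}$ $D$-parallel), $g$ a foliated metric in the normal bundle with locally $g_{ij}=\partial^2h/\partial y^i\partial y^j$, $h$ a function of $y$ only. Normal volume form $\omega=(\det g_{kl})^{1/2}dy^1\wedge\dots\wedge dy^q$; first Koszul form $\alpha$: $D_X\omega=\alpha(X)\omega$; second Koszul form $\beta=D\alpha$, $\beta_{ij}=\partial\alpha_i/\partial y^j$. On $N(M,\mathcal F)$ with fibre coordinates $\xi^i=dy^i$, $\mathcal F^N$ has plaques $\{(y,\xi)=\mathrm{const}\}$, $z^i=y^i+\sqrt{-1}\xi^i$ are transversely holomorphic coordinates and $g^N=\sum(g_{ij}\circ\pi)dz^id\bar z^j$ is a foliated Kähler metric; its normal Ricci tensor is the Ricci tensor of the corresponding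 transverse Kähler metric. *)

theory Defs
  imports "HOL-Analysis.Analysis"
begin

definition rpartial :: "'n::finite \<Rightarrow> (real^'n \<Rightarrow> real) \<Rightarrow> real^'n \<Rightarrow> real" where
  "rpartial i f y = deriv (\<lambda>t. f (y + axis i t)) 0"

fun iter_partial :: "'n::finite list \<Rightarrow> (real^'n \<Rightarrow> real) \<Rightarrow> real^'n \<Rightarrow> real" where
  "iter_partial [] f = f"
| "iter_partial (i # is) f = rpartial i (iter_partial is f)"

definition smooth_on :: "(real^'n::finite) set \<Rightarrow> (real^'n \<Rightarrow> real) \<Rightarrow> bool" where
  "smooth_on U f \<longleftrightarrow>
     (\<forall>is. continuous_on U (iter_partial is f) \<and>
        (\<forall>y\<in>U. \<forall>i. (\<lambda>t. iter_partial is f (y + axis i t)) differentiable (at 0)))"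

definition hess_metric :: "(real^'n::finite \<Rightarrow> real) \<Rightarrow> real^'n \<Rightarrow> real^'n^'n" where
  "hess_metric h y = (\<chi> i j. rpartial i (rpartial j h) y)"

definition pos_def :: "real^'n::finite^'n \<Rightarrow> bool" where
  "pos_def A \<longleftrightarrow> (\<forall>v. v \<noteq> 0 \<longrightarrow> (\<Sum>i\<in>UNIV. \<Sum>j\<in>UNIV. v$i * A$i$j * v$j) > 0)"

text \<open>Coefficient of the normal volume form omega = (det g)^(1/2) dy^1 ^ ... ^ dy^q.\<close>
definition vol_coeff :: "(real^'n::finite \<Rightarrow> real) \<Rightarrow> real^'n \<Rightarrow> real" where
  "vol_coeff h y = sqrt (det (hess_metric h y))"

text \<open>First Koszul form: D_X omega = alpha(X) omega. Since dy^1 ^...^ dy^q is D-parallel,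
  D_{d/dy^i} omega = (d/dy^i of the coefficient) dy^1^..^dy^q, hence alpha_i is:\<close>
definition koszul_alpha :: "(real^'n::finite \<Rightarrow> real) \<Rightarrow> 'n \<Rightarrow> real^'n \<Rightarrow> real" where
  "koszul_alpha h i y = rpartial i (vol_coeff h) y / vol_coeff h y"

text \<open>Second Koszul form beta = D alpha, beta_ij = d alpha_i / dy^j.\<close>
definition koszul_beta :: "(real^'n::finite \<Rightarrow> real) \<Rightarrow> 'n \<Rightarrow> 'n \<Rightarrow> real^'n \<Rightarrow> real" where
  "koszul_beta h i j y = rpartial j (koszul_alpha h i) y"

definition re_vec :: "complex^'n::finite \<Rightarrow> real^'n" where
  "re_vec z = (\<chi> i. Re (z$i))"

definition cvec :: "real^'n::finite \<Rightarrow> real^'n \<Rightarrow> complex^'n" where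
  "cvec y \<xi> = (\<chi> i. Complex (y$i) (\<xi>$i))"

definition dRe :: "'n::finite \<Rightarrow> (complex^'n \<Rightarrow> complex) \<Rightarrow> complex^'n \<Rightarrow> complex" where
  "dRe i F z = vector_derivative (\<lambda>t::real. F (z + axis i (complex_of_real t))) (at 0)"

definition dIm :: "'n::finite \<Rightarrow> (complex^'n \<Rightarrow> complex) \<Rightarrow> complex^'n \<Rightarrow> complex" where
  "dIm i F z = vector_derivative (\<lambda>t::real. F (z + axis i (\<i> * complex_of_real t))) (at 0)"

definition dz :: "'n::finite \<Rightarrow> (complex^'n \<Rightarrow> complex) \<Rightarrow> complex^'n \<Rightarrow> complex" where
  "dz i F z = (dRe i F z - \<i> * dIm i F z) / 2"

definition dzb :: "'n::finite \<Rightarrow> (complex^'n \<Rightarrow> complex) \<Rightarrow> complex^'n \<Rightarrow> complex" where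
  "dzb i F z = (dRe i F z + \<i> * dIm i F z) / 2"

text \<open>Coefficients g_{i jbar} of the normal Kaehler metric g^N = sum (g_ij o pi) dz^i dzbar^j.\<close>
definition kahler_coeff :: "(real^'n::finite \<Rightarrow> real) \<Rightarrow> complex^'n \<Rightarrow> complex^'n^'n" where
  "kahler_coeff h z = (\<chi> i j. complex_of_real (hess_metric h (re_vec z) $ i $ j))"

text \<open>Curvature of a Kaehler metric G (G z $ i $ j = g_{i jbar}) with
  g^{p qbar} = (matrix_inv G) $ q $ p, so that sum_q g^{p qbar} g_{r qbar} = delta_pr:
  R_{i jbar k lbar} = - d_k d_lbar g_{i jbar} + g^{p qbar} d_k g_{i qbar} d_lbar g_{p jbar}.\<close>
definition kahler_curv ::
  "(complex^'n::finite \<Rightarrow> complex^'n^'n) \<Rightarrow> 'n \<Rightarrow> 'n \<Rightarrow> 'n \<Rightarrow> 'n \<Rightarrow> complex^'n \<Rightarrow> complex" where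
  "kahler_curv G i j k l z =
     - dz k (dzb l (\<lambda>w. G w $ i $ j)) z
     + (\<Sum>p\<in>UNIV. \<Sum>q\<in>UNIV. matrix_inv (G z) $ q $ p
            * dz k (\<lambda>w. G w $ i $ q) z * dzb l (\<lambda>w. G w $ p $ j) z)"

definition kahler_ricci ::
  "(complex^'n::finite \<Rightarrow> complex^'n^'n) \<Rightarrow> 'n \<Rightarrow> 'n \<Rightarrow> complex^'n \<Rightarrow> complex" where
  "kahler_ricci G k l z =
     (\<Sum>i\<in>UNIV. \<Sum>j\<in>UNIV. matrix_inv (G z) $ j $ i * kahler_curv G i j k l z)"

end

theory Submission
  imports Defs
begin

text \<open>
  In the coordinates \<open>z = y + \<i> \<xi>\<close> every coefficient \<open>g\<^sub>i\<^sub>j \<circ> \<pi>\<close> of \<open>g\<^sup>N\<close> depends on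
  \<open>y = Re z\<close> only, so each Wirtinger derivative is half the real partial derivative
  \<open>\<partial>/\<partial>y\<close>.  The Kaehler curvature formula then gives
  \<open>R\<^sub>i\<^sub>j = (tr (g\<^sup>-\<^sup>1 \<partial>\<^sub>i g g\<^sup>-\<^sup>1 \<partial>\<^sub>j g) - tr (g\<^sup>-\<^sup>1 \<partial>\<^sub>i \<partial>\<^sub>j g)) / 4\<close>.
  On the other side Jacobi's formula \<open>\<partial> det g = det g tr (g\<^sup>-\<^sup>1 \<partial> g)\<close> yields
  \<open>\<alpha>\<^sub>i = tr (g\<^sup>-\<^sup>1 \<partial>\<^sub>i g) / 2\<close>, and differentiating once more with
  \<open>\<partial> (g\<^sup>-\<^sup>1) = - g\<^sup>-\<^sup>1 \<partial>g g\<^sup>-\<^sup>1\<close> gives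
  \<open>\<beta>\<^sub>i\<^sub>j = (tr (g\<^sup>-\<^sup>1 \<partial>\<^sub>j \<partial>\<^sub>i g) - tr (g\<^sup>-\<^sup>1 \<partial>\<^sub>j g g\<^sup>-\<^sup>1 \<partial>\<^sub>i g)) / 2\<close>.
  Symmetry of second derivatives and cyclicity of the trace identify \<open>R\<^sub>i\<^sub>j\<close> with \<open>-\<beta>\<^sub>i\<^sub>j / 2\<close>.
\<close>

section \<open>Partial derivatives along coordinate axes\<close>

lemma axis_add: "axis i (s + t) = axis i s + (axis i t :: 'a::monoid_add^'n::finite)"
  by (simp add: axis_def vec_eq_iff)

lemma axis_zero [simp]: "axis i 0 = (0 :: 'a::zero^'n::finite)"
  by (simp add: axis_def vec_eq_iff)

lemma norm_axis: "norm (axis i x :: 'a::real_normed_vector^'n::finite) = norm x"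
proof -
  have "(\<Sum>j\<in>UNIV. (norm (axis i x $ j))\<^sup>2) = (norm x)\<^sup>2"
    by (simp add: axis_def if_distrib[of norm] if_distrib[of "\<lambda>t. t\<^sup>2"] cong: if_cong)
  then show ?thesis by (simp add: norm_vec_def L2_set_def)
qed

definition partial_differentiable :: "'n::finite \<Rightarrow> (real^'n \<Rightarrow> real) \<Rightarrow> real^'n \<Rightarrow> bool" where
  "partial_differentiable i f y \<longleftrightarrow> (\<lambda>t. f (y + axis i t)) differentiable (at 0)"

lemma has_real_derivative_rpartial:
  assumes "partial_differentiable i f y"
  shows "((\<lambda>t. f (y + axis i t)) has_real_derivative rpartial i f y) (at 0)"
  using assms unfolding partial_differentiable_def rpartial_def
  by (simp add: DERIV_deriv_iff_real_differentiable)

lemma has_real_derivative_rpartial_at: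
  assumes "partial_differentiable i f (y + axis i s)"
  shows "((\<lambda>t. f (y + axis i t)) has_real_derivative rpartial i f (y + axis i s)) (at s)"
proof -
  have "(\<lambda>t. f ((y + axis i s) + axis i t)) = (\<lambda>t. f (y + axis i (t + s)))"
    by (simp add: axis_add algebra_simps)
  then show ?thesis
    using has_real_derivative_rpartial[OF assms] DERIV_shift[of "\<lambda>t. f (y + axis i t)" _ 0 s]
    by simp
qed

lemma eventually_add_axis_in_open:
  assumes "open U" "y \<in> U"
  shows "\<forall>\<^sub>F t in nhds 0. y + axis i (t::real) \<in> U"
proof -
  obtain r where r: "r > 0" "ball y r \<subseteq> U" using assms open_contains_ball by blast
  have "\<forall>\<^sub>F t in nhds 0. t \<in> ball (0::real) r"
    using r by (intro eventually_nhds_in_open) auto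
  then show ?thesis
    by eventually_elim (use r in \<open>auto simp: dist_norm norm_axis\<close>)
qed

lemma rpartial_cong_open:
  assumes "open U" "y \<in> U" "\<And>x. x \<in> U \<Longrightarrow> f x = g x"
  shows "rpartial i f y = rpartial i g y"
  unfolding rpartial_def
  by (rule deriv_cong_ev)
     (use eventually_add_axis_in_open[OF assms(1,2), of i] assms(3) in \<open>auto elim: eventually_mono\<close>)

lemma iter_partial_append: "iter_partial (is @ js) f = iter_partial is (iter_partial js f)"
  by (induction "is") simp_all

lemma smooth_on_iter_partial: "smooth_on U f \<Longrightarrow> smooth_on U (iter_partial is f)"
  by (simp add: smooth_on_def iter_partial_append[symmetric])

lemma smooth_on_rpartial: "smooth_on U f \<Longrightarrow> smooth_on U (rpartial i f)"
  using smooth_on_iter_partial[of U f "[i]"] by simp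

lemma smooth_on_partial_differentiable:
  "smooth_on U f \<Longrightarrow> y \<in> U \<Longrightarrow> partial_differentiable i f y"
  using iter_partial.simps(1) by (metis smooth_on_def partial_differentiable_def)

lemma smooth_on_imp_continuous_on: "smooth_on U f \<Longrightarrow> continuous_on U f"
  using iter_partial.simps(1) by (metis smooth_on_def)

section \<open>Symmetry of second partial derivatives\<close>

lemma rpartial_mean_value:
  assumes "t > 0" "\<And>s. 0 \<le> s \<Longrightarrow> s \<le> t \<Longrightarrow> partial_differentiable i f (x + axis i s)"
  shows "\<exists>\<sigma>. 0 < \<sigma> \<and> \<sigma> < t \<and> f (x + axis i t) - f x = t * rpartial i f (x + axis i \<sigma>)"
  using MVT2[of 0 t "\<lambda>s. f (x + axis i s)" "\<lambda>s. rpartial i f (x + axis i s)"]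
    assms(1) has_real_derivative_rpartial_at[OF assms(2)] by simp

lemma second_difference_mean_value:
  assumes "s > 0"
    and square: "\<And>u v. 0 \<le> u \<Longrightarrow> u \<le> s \<Longrightarrow> 0 \<le> v \<Longrightarrow> v \<le> s \<Longrightarrow> y + axis a u + axis b v \<in> U"
    and f: "\<And>x i. x \<in> U \<Longrightarrow> partial_differentiable i f x"
    and fa: "\<And>x i. x \<in> U \<Longrightarrow> partial_differentiable i (rpartial a f) x"
  shows "\<exists>u v. 0 < u \<and> u < s \<and> 0 < v \<and> v < s \<and>
     f (y + axis a s + axis b s) - f (y + axis a s) - f (y + axis b s) + f y
       = s\<^sup>2 * rpartial b (rpartial a f) (y + axis a u + axis b v)"
proof -
  define \<phi> where "\<phi> u = f (y + axis b s + axis a u) - f (y + axis a u)" for u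
  have "\<exists>u. 0 < u \<and> u < s \<and> \<phi> s - \<phi> 0
      = (s - 0) * (rpartial a f (y + axis b s + axis a u) - rpartial a f (y + axis a u))"
  proof (rule MVT2)
    fix x :: real assume "0 \<le> x" "x \<le> s"
    then have "y + axis b s + axis a x \<in> U" "y + axis a x \<in> U"
      using square[of x s] square[of x 0] \<open>s > 0\<close> by (simp_all add: algebra_simps)
    then show "(\<phi> has_real_derivative
        rpartial a f (y + axis b s + axis a x) - rpartial a f (y + axis a x)) (at x)"
      unfolding \<phi>_def by (intro DERIV_diff has_real_derivative_rpartial_at f)
  qed (use assms in auto)
  then obtain u where u: "0 < u" "u < s"
    and eq_u: "\<phi> s - \<phi> 0 = s * (rpartial a f (y + axis a u + axis b s) - rpartial a f (y + axis a u))"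
    by (auto simp: algebra_simps)
  obtain v where v: "0 < v" "v < s"
    and eq_v: "rpartial a f (y + axis a u + axis b s) - rpartial a f (y + axis a u)
      = s * rpartial b (rpartial a f) (y + axis a u + axis b v)"
    using rpartial_mean_value[of s b "rpartial a f" "y + axis a u"] assms u
    by (auto intro!: fa square)
  have "f (y + axis a s + axis b s) - f (y + axis a s) - f (y + axis b s) + f y = \<phi> s - \<phi> 0"
    by (simp add: \<phi>_def algebra_simps)
  then show ?thesis
    using u v eq_u eq_v by (auto simp: power2_eq_square)
qed

lemma dist_add_axis_axis: "dist (y + axis a u + axis b v) y \<le> \<bar>u\<bar> + \<bar>v::real\<bar>"
  using norm_triangle_ineq[of "axis a u" "axis b v"] by (simp add: dist_norm norm_axis)

lemma rpartial_commute:
  assumes "open U" "y \<in> U"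
    and f: "\<And>x i. x \<in> U \<Longrightarrow> partial_differentiable i f x"
    and fa: "\<And>x i. x \<in> U \<Longrightarrow> partial_differentiable i (rpartial a f) x"
    and fb: "\<And>x i. x \<in> U \<Longrightarrow> partial_differentiable i (rpartial b f) x"
    and cont_ba: "continuous_on U (rpartial b (rpartial a f))"
    and cont_ab: "continuous_on U (rpartial a (rpartial b f))"
  shows "rpartial a (rpartial b f) y = rpartial b (rpartial a f) y"
proof (rule ccontr)
  define c1 where "c1 = rpartial b (rpartial a f) y"
  define c2 where "c2 = rpartial a (rpartial b f) y"
  define e where "e = \<bar>c1 - c2\<bar> / 2"
  assume "c2 \<noteq> c1"
  then have "e > 0" by (simp add: e_def)
  obtain d1 where d1: "d1 > 0" "\<And>x. x \<in> U \<Longrightarrow> dist x y < d1 \<Longrightarrow> dist (rpartial b (rpartial a f) x) c1 < e"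
    using cont_ba \<open>e > 0\<close> assms(2) unfolding continuous_on_iff c1_def by metis
  obtain d2 where d2: "d2 > 0" "\<And>x. x \<in> U \<Longrightarrow> dist x y < d2 \<Longrightarrow> dist (rpartial a (rpartial b f) x) c2 < e"
    using cont_ab \<open>e > 0\<close> assms(2) unfolding continuous_on_iff c2_def by metis
  obtain r where r: "r > 0" "ball y r \<subseteq> U" using assms(1,2) open_contains_ball by blast
  define s where "s = min r (min d1 d2) / 4"
  have "s > 0" using r d1 d2 by (simp add: s_def)
  have near: "dist (y + axis a u + axis b v) y < min r (min d1 d2)"
    if "0 \<le> u" "u \<le> s" "0 \<le> v" "v \<le> s" for u v
    using dist_add_axis_axis[of y a u b v] that \<open>s > 0\<close> by (simp add: s_def)
  have square_ab: "y + axis a u + axis b v \<in> U" if "0 \<le> u" "u \<le> s" "0 \<le> v" "v \<le> s" for u v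
    using near[OF that] r by (auto simp: dist_commute)
  have square_ba: "y + axis b v + axis a u \<in> U" if "0 \<le> v" "v \<le> s" "0 \<le> u" "u \<le> s" for u v
    using square_ab[OF that(3,4,1,2)] by (simp add: algebra_simps)
  obtain u v where uv: "0 < u" "u < s" "0 < v" "v < s"
    and diff_ba: "f (y + axis a s + axis b s) - f (y + axis a s) - f (y + axis b s) + f y
       = s\<^sup>2 * rpartial b (rpartial a f) (y + axis a u + axis b v)"
    using second_difference_mean_value[OF \<open>s > 0\<close> square_ab f fa] by blast
  obtain u' v' where uv': "0 < u'" "u' < s" "0 < v'" "v' < s"
    and diff_ab: "f (y + axis b s + axis a s) - f (y + axis b s) - f (y + axis a s) + f y
       = s\<^sup>2 * rpartial a (rpartial b f) (y + axis b u' + axis a v')"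
    using second_difference_mean_value[OF \<open>s > 0\<close> square_ba f fb] by blast
  have "rpartial b (rpartial a f) (y + axis a u + axis b v)
      = rpartial a (rpartial b f) (y + axis a v' + axis b u')"
    using diff_ab diff_ba \<open>s > 0\<close> by (simp add: algebra_simps)
  moreover have "dist (rpartial b (rpartial a f) (y + axis a u + axis b v)) c1 < e"
    using d1(2)[OF square_ab] near uv by auto
  moreover have "dist (rpartial a (rpartial b f) (y + axis a v' + axis b u')) c2 < e"
    using d2(2)[OF square_ab] near uv' by auto
  ultimately have "\<bar>c1 - c2\<bar> < 2 * e" by (simp add: dist_real_def)
  then show False by (simp add: e_def)
qed

lemma smooth_on_rpartial_commute:
  assumes "open U" "smooth_on U f" "y \<in> U"
  shows "rpartial a (rpartial b f) y = rpartial b (rpartial a f) y"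
  by (rule rpartial_commute[OF assms(1,3)])
    (use assms(2) in \<open>simp_all add: smooth_on_partial_differentiable smooth_on_rpartial
       smooth_on_imp_continuous_on smooth_on_partial_differentiable[OF smooth_on_rpartial]\<close>)

section \<open>Derivatives of determinant, inverse and trace\<close>

lemma matrix_inv_det_nz:
  fixes A :: "'a::field^'n::finite^'n"
  assumes "det A \<noteq> 0"
  shows "A ** matrix_inv A = mat 1" "matrix_inv A ** A = mat 1"
proof -
  obtain A' where "A ** A' = mat 1 \<and> A' ** A = mat 1"
    using assms invertible_det_nz unfolding invertible_def by blast
  then have "A ** matrix_inv A = mat 1 \<and> matrix_inv A ** A = mat 1"
    unfolding matrix_inv_def by (rule someI)
  then show "A ** matrix_inv A = mat 1" "matrix_inv A ** A = mat 1"
    by simp_all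
qed

lemma matrix_inv_unique:
  fixes A B :: "'a::field^'n::finite^'n"
  assumes "A ** B = mat 1" "B ** A = mat 1"
  shows "matrix_inv A = B"
proof -
  have "det A \<noteq> 0"
    using assms invertible_det_nz unfolding invertible_def by blast
  then have "matrix_inv A = (B ** A) ** matrix_inv A" using assms by simp
  also have "\<dots> = B"
    by (simp add: matrix_mul_assoc[symmetric] matrix_inv_det_nz \<open>det A \<noteq> 0\<close>)
  finally show ?thesis .
qed

lemma pos_def_det_nz:
  fixes A :: "real^'n::finite^'n"
  assumes "pos_def A"
  shows "det A \<noteq> 0"
proof
  assume "det A = 0"
  then have "\<not> (\<exists>B. B ** A = mat 1)"
    using invertible_det_nz invertible_left_inverse by blast
  then obtain x where x: "A *v x = 0" "x \<noteq> 0"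
    using matrix_left_invertible_ker by blast
  have "(\<Sum>i\<in>UNIV. \<Sum>j\<in>UNIV. x$i * A$i$j * x$j) = (\<Sum>i\<in>UNIV. x$i * (A *v x) $ i)"
    by (simp add: matrix_vector_mult_def sum_distrib_left mult.assoc)
  also have "\<dots> = 0" using x by simp
  finally show False using assms x unfolding pos_def_def by auto
qed

lemma trace_mult_eq_sum:
  "trace (A ** B) = (\<Sum>a\<in>UNIV. \<Sum>b\<in>UNIV. A $ a $ b * B $ b $ a)"
  by (simp add: trace_def matrix_matrix_mult_def)

lemma has_real_derivative_det_rows:
  fixes F :: "real \<Rightarrow> real^'n::finite^'n"
  assumes "\<And>a b. ((\<lambda>t. F t $ a $ b) has_real_derivative F' $ a $ b) (at t0)"
  shows "((\<lambda>t. det (F t)) has_real_derivative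
     (\<Sum>k\<in>UNIV. det (\<chi> i. if i = k then F' $ i else F t0 $ i))) (at t0)"
proof -
  let ?P = "{p. p permutes (UNIV::'n set)}"
  let ?term = "\<lambda>k p. of_int (sign p) * (F' $ k $ p k * (\<Prod>i\<in>UNIV - {k}. F t0 $ i $ p i))"
  have "((\<lambda>t. det (F t)) has_real_derivative (\<Sum>p\<in>?P. \<Sum>k\<in>UNIV. ?term k p)) (at t0)"
    unfolding det_def sum_distrib_left[symmetric]
    by (intro DERIV_sum DERIV_cmult has_field_derivative_prod assms)
  moreover have "(\<Sum>p\<in>?P. \<Sum>k\<in>UNIV. ?term k p) = (\<Sum>k\<in>UNIV. \<Sum>p\<in>?P. ?term k p)"
    by (rule sum.swap)
  moreover have "(\<Sum>p\<in>?P. ?term k p) = det (\<chi> i. if i = k then F' $ i else F t0 $ i)" for k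
    unfolding det_def
  proof (rule sum.cong[OF refl])
    fix p
    have "(\<Prod>i\<in>UNIV. (\<chi> i. if i = k then F' $ i else F t0 $ i) $ i $ p i)
        = F' $ k $ p k * (\<Prod>i\<in>UNIV - {k}. F t0 $ i $ p i)"
      by (subst prod.remove[of _ k]) (auto intro!: prod.cong)
    then show "?term k p = of_int (sign p) * (\<Prod>i\<in>UNIV. (\<chi> i. if i = k then F' $ i else F t0 $ i) $ i $ p i)"
      by simp
  qed
  ultimately show ?thesis
    by simp
qed

lemma det_replace_row:
  fixes A :: "'a::field^'n::finite^'n"
  assumes "det A \<noteq> 0"
  shows "det (\<chi> i. if i = k then r else A $ i) = det A * (\<Sum>j\<in>UNIV. r $ j * matrix_inv A $ j $ k)"
proof -
  have axis_row: "det (\<chi> i. if i = k then axis j 1 else A $ i) = det A * matrix_inv A $ j $ k" for j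
  proof -
    let ?x = "row j (matrix_inv A)"
    have "(\<Sum>i\<in>UNIV. ?x $ i *s row i A) = (matrix_inv A ** A) $ j"
      by (simp add: vec_eq_iff row_def matrix_matrix_mult_def sum_component)
    also have "\<dots> = axis j 1"
      using matrix_inv_det_nz[OF assms] by (simp add: mat_def axis_def vec_eq_iff)
    finally have rows: "(\<Sum>i\<in>UNIV. ?x $ i *s row i A) = axis j 1" .
    have "det (\<chi> i. if i = k then axis j 1 else row i A) = ?x $ k * det A"
      using cramer_lemma_transpose[of k ?x A] unfolding rows .
    moreover have "(\<chi> i. if i = k then axis j 1 else row i A) = (\<chi> i. if i = k then axis j 1 else A $ i)"
      by (simp add: row_def vec_eq_iff)
    ultimately show ?thesis by (simp add: row_def mult.commute)
  qed
  have "det (\<chi> i. if i = k then r else A $ i)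
      = det (\<chi> i. if i = k then (\<Sum>j\<in>UNIV. r $ j *s axis j 1) else A $ i)"
    by (simp only: basis_expansion)
  also have "\<dots> = (\<Sum>j\<in>UNIV. det (\<chi> i. if i = k then r $ j *s axis j 1 else A $ i))"
    by (rule det_linear_row_sum) simp
  also have "\<dots> = (\<Sum>j\<in>UNIV. r $ j * det (\<chi> i. if i = k then axis j 1 else A $ i))"
    by (simp add: det_row_mul)
  finally show ?thesis
    by (simp add: axis_row sum_distrib_left algebra_simps)
qed

lemma has_real_derivative_det:
  fixes F :: "real \<Rightarrow> real^'n::finite^'n"
  assumes "\<And>a b. ((\<lambda>t. F t $ a $ b) has_real_derivative F' $ a $ b) (at t0)"
    and "det (F t0) \<noteq> 0"
  shows "((\<lambda>t. det (F t)) has_real_derivative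
     det (F t0) * trace (matrix_inv (F t0) ** F')) (at t0)"
proof -
  have "(\<Sum>k\<in>UNIV. det (\<chi> i. if i = k then F' $ i else F t0 $ i))
     = (\<Sum>k\<in>UNIV. det (\<chi> i. if i = k then F' $ k else F t0 $ i))"
    by (intro sum.cong refl arg_cong[where f=det]) (auto simp: vec_eq_iff)
  also have "\<dots> = (\<Sum>k\<in>UNIV. det (F t0) * (\<Sum>j\<in>UNIV. F' $ k $ j * matrix_inv (F t0) $ j $ k))"
    by (simp add: det_replace_row assms(2))
  also have "\<dots> = det (F t0) * trace (F' ** matrix_inv (F t0))"
    by (simp add: trace_mult_eq_sum sum_distrib_left)
  also have "\<dots> = det (F t0) * trace (matrix_inv (F t0) ** F')"
    by (metis trace_mul_sym)
  finally show ?thesis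
    using has_real_derivative_det_rows[OF assms(1)] by simp
qed

lemma matrix_inv_nth_cramer:
  fixes A :: "real^'n::finite^'n"
  assumes "det A \<noteq> 0"
  shows "matrix_inv A $ a $ b = det (\<chi> i m. if m = a then axis b 1 $ i else A $ i $ m) / det A"
proof -
  have "A *v (matrix_inv A *v axis b 1) = axis b 1"
    by (simp add: matrix_vector_mul_assoc matrix_inv_det_nz[OF assms])
  then have "(matrix_inv A *v axis b 1) $ a = det (\<chi> i m. if m = a then axis b 1 $ i else A $ i $ m) / det A"
    using cramer[OF assms] by simp
  moreover have "(matrix_inv A *v axis b 1) $ a = matrix_inv A $ a $ b"
    by (simp add: matrix_vector_mult_def axis_def if_distrib cong: if_cong)
  ultimately show ?thesis by simp
qed

lemma eventually_det_nz:
  fixes F :: "real \<Rightarrow> real^'n::finite^'n"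
  assumes "\<And>a b. ((\<lambda>t. F t $ a $ b) has_real_derivative F' $ a $ b) (at t0)"
    and "det (F t0) \<noteq> 0"
  shows "\<forall>\<^sub>F t in nhds t0. det (F t) \<noteq> 0"
proof -
  have "isCont (\<lambda>t. det (F t)) t0"
    using has_real_derivative_det[OF assms] by (rule DERIV_isCont)
  then have "((\<lambda>t. det (F t)) \<longlongrightarrow> det (F t0)) (nhds t0)"
    unfolding isCont_def by (rule tendsto_at_iff_tendsto_nhds[THEN iffD1])
  then show ?thesis
    using assms(2) by (rule tendsto_imp_eventually_ne)
qed

lemma matrix_inv_nth_real_differentiable:
  fixes F :: "real \<Rightarrow> real^'n::finite^'n"
  assumes deriv: "\<And>a b. ((\<lambda>t. F t $ a $ b) has_real_derivative F' $ a $ b) (at t0)"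
    and "det (F t0) \<noteq> 0"
  shows "(\<lambda>t. matrix_inv (F t) $ a $ b) differentiable (at t0)"
proof -
  define C where "C t = (\<chi> i m. if m = a then axis b 1 $ i else F t $ i $ m)" for t
  define C' where "C' = (\<chi> i m. if m = a then 0 else F' $ i $ m)"
  have dC: "((\<lambda>t. C t $ i $ m) has_real_derivative C' $ i $ m) (at t0)" for i m
    by (cases "m = a") (simp_all add: C_def C'_def deriv)
  obtain N' D' where quotient: "((\<lambda>t. det (C t) / det (F t)) has_real_derivative
      (N' * det (F t0) - det (C t0) * D') / (det (F t0) * det (F t0))) (at t0)"
    using DERIV_divide[OF has_real_derivative_det_rows[OF dC] has_real_derivative_det_rows[OF deriv]
        assms(2)] by blast
  have cramer_ev: "\<forall>\<^sub>F t in nhds t0. det (C t) / det (F t) = matrix_inv (F t) $ a $ b"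
    using eventually_det_nz[OF assms] by eventually_elim (simp add: matrix_inv_nth_cramer C_def)
  show ?thesis
    unfolding real_differentiable_def using DERIV_cong_ev[OF refl cramer_ev refl] quotient by blast
qed

text \<open>Given differentiability, the derivative is found by differentiating \<open>F t ** matrix_inv (F t) = mat 1\<close>.\<close>
lemma has_real_derivative_matrix_inv:
  fixes F :: "real \<Rightarrow> real^'n::finite^'n"
  assumes deriv: "\<And>a b. ((\<lambda>t. F t $ a $ b) has_real_derivative F' $ a $ b) (at t0)"
    and nz: "det (F t0) \<noteq> 0"
  shows "((\<lambda>t. matrix_inv (F t) $ a $ b) has_real_derivative
      - (matrix_inv (F t0) ** F' ** matrix_inv (F t0)) $ a $ b) (at t0)"
proof -
  define X where "X = (\<chi> a b. deriv (\<lambda>t. matrix_inv (F t) $ a $ b) t0)"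
  have dX: "((\<lambda>t. matrix_inv (F t) $ a $ b) has_real_derivative X $ a $ b) (at t0)" for a b
    unfolding X_def using matrix_inv_nth_real_differentiable[OF assms]
    by (simp add: DERIV_deriv_iff_real_differentiable)
  let ?A = "F t0" and ?I = "matrix_inv (F t0)"
  have "(F' ** ?I + ?A ** X) $ a $ b = 0" for a b
  proof -
    let ?entry = "\<lambda>t. \<Sum>m\<in>UNIV. F t $ a $ m * matrix_inv (F t) $ m $ b"
    have deriv_entry:
      "(?entry has_real_derivative (\<Sum>m\<in>UNIV. F' $ a $ m * ?I $ m $ b + ?A $ a $ m * X $ m $ b)) (at t0)"
      by (intro DERIV_sum) (auto intro!: derivative_eq_intros deriv dX)
    have "?entry t = (F t ** matrix_inv (F t)) $ a $ b" for t
      by (simp add: matrix_matrix_mult_def)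
    then have entry_ev: "\<forall>\<^sub>F t in nhds t0. ?entry t = mat 1 $ a $ b"
      using eventually_det_nz[OF assms] by (auto elim!: eventually_mono simp: matrix_inv_det_nz(1))
    then have "(?entry has_real_derivative 0) (at t0)"
      using DERIV_cong_ev[OF refl entry_ev refl] DERIV_const by blast
    from DERIV_unique[OF deriv_entry this] show ?thesis
      by (simp add: matrix_matrix_mult_def sum.distrib)
  qed
  then have zero: "F' ** ?I + ?A ** X = 0" by (simp add: vec_eq_iff)
  have "?I ** F' ** ?I + X = ?I ** (F' ** ?I + ?A ** X)"
    by (simp add: matrix_add_ldistrib matrix_mul_assoc matrix_inv_det_nz(2)[OF nz])
  also have "\<dots> = 0"
    unfolding zero by (simp add: matrix_matrix_mult_def vec_eq_iff)
  finally have "X = - (?I ** F' ** ?I)"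
    by (simp add: add_eq_0_iff)
  then show ?thesis using dX[of a b] by simp
qed

lemma has_real_derivative_trace_mult:
  fixes A B :: "real \<Rightarrow> real^'n::finite^'n"
  assumes "\<And>a b. ((\<lambda>t. A t $ a $ b) has_real_derivative A' $ a $ b) (at t0)"
    and "\<And>a b. ((\<lambda>t. B t $ a $ b) has_real_derivative B' $ a $ b) (at t0)"
  shows "((\<lambda>t. trace (A t ** B t)) has_real_derivative
      trace (A' ** B t0) + trace (A t0 ** B')) (at t0)"
  unfolding trace_mult_eq_sum
  by (auto intro!: derivative_eq_intros assms simp: sum.distrib algebra_simps)

lemma trace_mult_rotate:
  fixes A B C D :: "'a::comm_semiring_1^'n::finite^'n"
  shows "trace (A ** B ** C ** D) = trace (D ** A ** B ** C)"
  using trace_mul_sym[of "A ** B ** C" D] by (simp add: matrix_mul_assoc)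

lemma trace_uminus_mult: "trace (- A ** B) = - trace (A ** (B :: 'a::comm_ring_1^'n::finite^'n))"
  by (simp add: trace_mult_eq_sum sum_negf)

section \<open>The Koszul forms of a Hessian metric\<close>

definition matrix_rpartial ::
  "'n::finite \<Rightarrow> (real^'n \<Rightarrow> real^'m::finite^'m) \<Rightarrow> real^'n \<Rightarrow> real^'m^'m" where
  "matrix_rpartial k F y = (\<chi> a b. rpartial k (\<lambda>x. F x $ a $ b) y)"

lemma has_real_derivative_matrix_rpartial:
  assumes "partial_differentiable k (\<lambda>x. F x $ a $ b) y"
  shows "((\<lambda>t. F (y + axis k t) $ a $ b) has_real_derivative matrix_rpartial k F y $ a $ b) (at 0)"
  using has_real_derivative_rpartial[OF assms] by (simp add: matrix_rpartial_def)

lemma matrix_rpartial_commute: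
  assumes "open U" "\<And>a b. smooth_on U (\<lambda>x. F x $ a $ b)" "y \<in> U"
  shows "matrix_rpartial i (matrix_rpartial j F) y = matrix_rpartial j (matrix_rpartial i F) y"
  using smooth_on_rpartial_commute[OF assms(1) assms(2) assms(3)]
  by (simp add: matrix_rpartial_def vec_eq_iff)

lemma hess_metric_nth: "(\<lambda>x. hess_metric h x $ a $ b) = rpartial a (rpartial b h)"
  by (simp add: hess_metric_def)

lemma matrix_rpartial_hess_metric_nth:
  "(\<lambda>x. matrix_rpartial k (hess_metric h) x $ a $ b) = rpartial k (rpartial a (rpartial b h))"
  by (simp add: matrix_rpartial_def hess_metric_nth)

lemma DERIV_real_sqrt_nonzero:
  assumes "x \<noteq> 0"
  shows "DERIV sqrt x :> sqrt x / (2 * x)"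
proof -
  have "sqrt x / (2 * x) = (if x > 0 then inverse (sqrt x) / 2 else - inverse (sqrt x) / 2)"
    using assms by (cases "x > 0") (simp_all add: field_simps real_sqrt_mult_self real_sqrt_minus)
  then show ?thesis
    using DERIV_real_sqrt_generic[OF assms] by simp
qed

lemma koszul_alpha_hess_metric:
  assumes "smooth_on U h" "x \<in> U" "det (hess_metric h x) \<noteq> 0"
  shows "koszul_alpha h i x
    = trace (matrix_inv (hess_metric h x) ** matrix_rpartial i (hess_metric h) x) / 2"
proof -
  let ?D = "det (hess_metric h x)"
  let ?T = "trace (matrix_inv (hess_metric h x) ** matrix_rpartial i (hess_metric h) x)"
  have "((\<lambda>t. hess_metric h (x + axis i t) $ a $ b) has_real_derivative
      matrix_rpartial i (hess_metric h) x $ a $ b) (at 0)" for a b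
    using assms(1,2) by (auto intro!: has_real_derivative_matrix_rpartial smooth_on_partial_differentiable
        smooth_on_rpartial simp: hess_metric_nth)
  from has_real_derivative_det[of "\<lambda>t. hess_metric h (x + axis i t)", OF this] assms(3)
  have "((\<lambda>t. det (hess_metric h (x + axis i t))) has_real_derivative ?D * ?T) (at 0)"
    by simp
  moreover have "DERIV sqrt (det (hess_metric h (x + axis i 0))) :> sqrt ?D / (2 * ?D)"
    using DERIV_real_sqrt_nonzero assms(3) by simp
  ultimately have "((\<lambda>t. vol_coeff h (x + axis i t)) has_real_derivative sqrt ?D / (2 * ?D) * (?D * ?T)) (at 0)"
    unfolding vol_coeff_def by (rule DERIV_chain2[rotated])
  then have "rpartial i (vol_coeff h) x = sqrt ?D / (2 * ?D) * (?D * ?T)"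
    unfolding rpartial_def by (rule DERIV_imp_deriv)
  then show ?thesis
    using assms(3) by (simp add: koszul_alpha_def vol_coeff_def)
qed

lemma koszul_beta_hess_metric:
  assumes "open U" "smooth_on U h" "\<forall>x\<in>U. det (hess_metric h x) \<noteq> 0" "y \<in> U"
  shows "koszul_beta h i j y =
    (trace (matrix_inv (hess_metric h y) ** matrix_rpartial j (matrix_rpartial i (hess_metric h)) y)
     - trace (matrix_inv (hess_metric h y) ** matrix_rpartial j (hess_metric h) y
          ** matrix_inv (hess_metric h y) ** matrix_rpartial i (hess_metric h) y)) / 2"
proof -
  let ?G = "hess_metric h" and ?I = "matrix_inv (hess_metric h y)"
  let ?tr = "\<lambda>x. trace (matrix_inv (?G x) ** matrix_rpartial i ?G x)"
  have beta: "koszul_beta h i j y = rpartial j (\<lambda>x. ?tr x / 2) y"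
    unfolding koszul_beta_def
    by (rule rpartial_cong_open[OF assms(1,4)]) (use assms koszul_alpha_hess_metric in blast)
  have "((\<lambda>t. ?G (y + axis j t) $ a $ b) has_real_derivative matrix_rpartial j ?G y $ a $ b) (at 0)"
    for a b
    using assms(2,4) by (auto intro!: has_real_derivative_matrix_rpartial smooth_on_partial_differentiable
        smooth_on_rpartial simp: hess_metric_nth)
  from has_real_derivative_matrix_inv[of "\<lambda>t. ?G (y + axis j t)", OF this] assms(3,4)
  have inv: "((\<lambda>t. matrix_inv (?G (y + axis j t)) $ a $ b) has_real_derivative
      (- (?I ** matrix_rpartial j ?G y ** ?I)) $ a $ b) (at 0)" for a b
    by simp
  have "((\<lambda>t. matrix_rpartial i ?G (y + axis j t) $ a $ b) has_real_derivative
      matrix_rpartial j (matrix_rpartial i ?G) y $ a $ b) (at 0)" for a b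
    using assms(2,4) by (auto intro!: has_real_derivative_matrix_rpartial smooth_on_partial_differentiable
        smooth_on_rpartial simp: matrix_rpartial_hess_metric_nth)
  from has_real_derivative_trace_mult[OF inv this]
  have "((\<lambda>t. ?tr (y + axis j t) / 2) has_real_derivative
      (trace (?I ** matrix_rpartial j (matrix_rpartial i ?G) y)
       - trace (?I ** matrix_rpartial j ?G y ** ?I ** matrix_rpartial i ?G y)) / 2) (at 0)"
    by (intro DERIV_cdivide) (simp add: trace_uminus_mult)
  then show ?thesis
    unfolding beta rpartial_def by (rule DERIV_imp_deriv)
qed

section \<open>The Ricci tensor of the normal Kaehler metric\<close>

lemma re_vec_add_real_axis: "re_vec (z + axis k (complex_of_real t)) = re_vec z + axis k t"
  by (simp add: re_vec_def axis_def vec_eq_iff)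

lemma re_vec_add_imag_axis: "re_vec (z + axis k (\<i> * complex_of_real t)) = re_vec z"
  by (simp add: re_vec_def axis_def vec_eq_iff)

lemma re_vec_cvec: "re_vec (cvec y \<xi>) = y"
  by (simp add: re_vec_def cvec_def vec_eq_iff)

lemma wirtinger_real_part:
  assumes "open U" "re_vec z \<in> U"
    and F: "\<And>w. re_vec w \<in> U \<Longrightarrow> F w = c * complex_of_real (f (re_vec w))"
    and "partial_differentiable k f (re_vec z)"
  shows "dz k F z = c * complex_of_real (rpartial k f (re_vec z)) / 2"
    and "dzb k F z = c * complex_of_real (rpartial k f (re_vec z)) / 2"
proof -
  let ?y = "re_vec z"
  have "(\<lambda>t. F (z + axis k (\<i> * complex_of_real t))) = (\<lambda>t. c * complex_of_real (f ?y))"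
    using F assms(2) by (simp add: re_vec_add_imag_axis)
  then have dIm: "dIm k F z = 0"
    unfolding dIm_def by simp
  obtain r where r: "r > 0" "ball ?y r \<subseteq> U"
    using assms(1,2) open_contains_ball by blast
  have "((\<lambda>t. f (?y + axis k t) *\<^sub>R c) has_vector_derivative (rpartial k f ?y *\<^sub>R c)) (at 0)"
    using has_vector_derivative_scaleR[OF has_real_derivative_rpartial[OF assms(4)]
        has_vector_derivative_const[of c]]
    by simp
  then have "((\<lambda>t. F (z + axis k (complex_of_real t))) has_vector_derivative (rpartial k f ?y *\<^sub>R c)) (at 0)"
  proof (rule has_vector_derivative_transform_within[OF _ r(1)])
    fix t :: real
    assume "dist t 0 < r"
    then have "?y + axis k t \<in> U"
      using r by (auto simp: dist_norm norm_axis)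
    then show "f (?y + axis k t) *\<^sub>R c = F (z + axis k (complex_of_real t))"
      using F[of "z + axis k (complex_of_real t)"] by (simp add: re_vec_add_real_axis scaleR_conv_of_real)
  qed simp
  then have dRe: "dRe k F z = c * complex_of_real (rpartial k f ?y)"
    unfolding dRe_def by (simp add: vector_derivative_at scaleR_conv_of_real mult.commute)
  show "dz k F z = c * complex_of_real (rpartial k f ?y) / 2"
    "dzb k F z = c * complex_of_real (rpartial k f ?y) / 2"
    by (simp_all add: dz_def dzb_def dRe dIm)
qed

lemma wirtinger_kahler_coeff:
  assumes "open U" "smooth_on U h" "re_vec z \<in> U"
  shows "dz k (\<lambda>w. kahler_coeff h w $ a $ b) z
      = complex_of_real (matrix_rpartial k (hess_metric h) (re_vec z) $ a $ b) / 2"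
    and "dzb k (\<lambda>w. kahler_coeff h w $ a $ b) z
      = complex_of_real (matrix_rpartial k (hess_metric h) (re_vec z) $ a $ b) / 2"
    and "dz k (dzb l (\<lambda>w. kahler_coeff h w $ a $ b)) z
      = complex_of_real (matrix_rpartial k (matrix_rpartial l (hess_metric h)) (re_vec z) $ a $ b) / 4"
proof -
  have coeff: "kahler_coeff h w $ a $ b = 1 * complex_of_real (rpartial a (rpartial b h) (re_vec w))" for w
    by (simp add: kahler_coeff_def hess_metric_def)
  have smooth: "smooth_on U (rpartial a (rpartial b h))"
    using assms(2) by (intro smooth_on_rpartial)
  have first: "dz k (\<lambda>w. kahler_coeff h w $ a $ b) w
      = complex_of_real (matrix_rpartial k (hess_metric h) (re_vec w) $ a $ b) / 2"
    "dzb k (\<lambda>w. kahler_coeff h w $ a $ b) w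
      = complex_of_real (matrix_rpartial k (hess_metric h) (re_vec w) $ a $ b) / 2"
    if "re_vec w \<in> U" for k w
    using wirtinger_real_part[OF assms(1) that coeff smooth_on_partial_differentiable[OF smooth that]]
    by (simp_all add: matrix_rpartial_def hess_metric_nth)
  then show "dz k (\<lambda>w. kahler_coeff h w $ a $ b) z
      = complex_of_real (matrix_rpartial k (hess_metric h) (re_vec z) $ a $ b) / 2"
    "dzb k (\<lambda>w. kahler_coeff h w $ a $ b) z
      = complex_of_real (matrix_rpartial k (hess_metric h) (re_vec z) $ a $ b) / 2"
    using assms(3) by blast+
  have "dzb l (\<lambda>w. kahler_coeff h w $ a $ b) w
      = 1 / 2 * complex_of_real (matrix_rpartial l (hess_metric h) (re_vec w) $ a $ b)" if "re_vec w \<in> U" for w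
    using first(2)[OF that] by simp
  moreover have "partial_differentiable k (\<lambda>x. matrix_rpartial l (hess_metric h) x $ a $ b) (re_vec z)"
    unfolding matrix_rpartial_hess_metric_nth
    using assms(2,3) by (intro smooth_on_partial_differentiable smooth_on_rpartial)
  ultimately have "dz k (dzb l (\<lambda>w. kahler_coeff h w $ a $ b)) z = 1 / 2 * complex_of_real
      (rpartial k (\<lambda>x. matrix_rpartial l (hess_metric h) x $ a $ b) (re_vec z)) / 2"
    by (rule wirtinger_real_part(1)[OF assms(1,3)])
  then show "dz k (dzb l (\<lambda>w. kahler_coeff h w $ a $ b)) z
      = complex_of_real (matrix_rpartial k (matrix_rpartial l (hess_metric h)) (re_vec z) $ a $ b) / 4"
    by (simp add: matrix_rpartial_def)
qed

lemma map_matrix_of_real_mult: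
  "map_matrix of_real (A ** B) = (map_matrix of_real A ** map_matrix of_real B :: 'a::real_algebra_1^'n::finite^'m::finite)"
  by (simp add: map_matrix_def matrix_matrix_mult_def vec_eq_iff of_real_sum)

lemma map_matrix_of_real_mat_1: "map_matrix of_real (mat 1) = (mat 1 :: 'a::real_algebra_1^'n::finite^'n)"
  by (simp add: map_matrix_def mat_def vec_eq_iff)

lemma matrix_inv_map_matrix_of_real:
  fixes A :: "real^'n::finite^'n"
  assumes "det A \<noteq> 0"
  shows "matrix_inv (map_matrix of_real A :: 'a::real_field^'n^'n) = map_matrix of_real (matrix_inv A)"
  by (rule matrix_inv_unique)
    (simp_all flip: map_matrix_of_real_mult add: matrix_inv_det_nz[OF assms] map_matrix_of_real_mat_1)

lemma kahler_curv_kahler_coeff: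
  assumes "open U" "smooth_on U h" "re_vec z \<in> U" "det (hess_metric h (re_vec z)) \<noteq> 0"
  shows "kahler_curv (kahler_coeff h) a b k l z = complex_of_real
      (((matrix_rpartial k (hess_metric h) (re_vec z) ** matrix_inv (hess_metric h (re_vec z))
          ** matrix_rpartial l (hess_metric h) (re_vec z)) $ a $ b
        - matrix_rpartial k (matrix_rpartial l (hess_metric h)) (re_vec z) $ a $ b) / 4)"
proof -
  let ?I = "matrix_inv (hess_metric h (re_vec z))"
  let ?Dk = "matrix_rpartial k (hess_metric h) (re_vec z)"
  let ?Dl = "matrix_rpartial l (hess_metric h) (re_vec z)"
  have inv: "matrix_inv (kahler_coeff h z) = map_matrix of_real ?I"
    using matrix_inv_map_matrix_of_real[OF assms(4)] by (simp add: kahler_coeff_def map_matrix_def)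
  have "(?Dk ** ?I ** ?Dl) $ a $ b = (\<Sum>p\<in>UNIV. \<Sum>q\<in>UNIV. ?I $ q $ p * ?Dk $ a $ q * ?Dl $ p $ b)"
    by (simp add: matrix_matrix_mult_def sum_distrib_left sum_distrib_right mult_ac)
  moreover have "complex_of_real x * (complex_of_real y / 2) * (complex_of_real w / 2)
      = complex_of_real (x * y * w) / 4" for x y w
    by simp
  ultimately show ?thesis
    unfolding kahler_curv_def inv wirtinger_kahler_coeff[OF assms(1-3)]
    by (simp add: of_real_sum sum_divide_distrib diff_divide_distrib)
qed

lemma kahler_ricci_kahler_coeff:
  assumes "open U" "smooth_on U h" "re_vec z \<in> U" "det (hess_metric h (re_vec z)) \<noteq> 0"
  shows "kahler_ricci (kahler_coeff h) k l z = complex_of_real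
      ((trace (matrix_rpartial k (hess_metric h) (re_vec z) ** matrix_inv (hess_metric h (re_vec z))
          ** matrix_rpartial l (hess_metric h) (re_vec z) ** matrix_inv (hess_metric h (re_vec z)))
        - trace (matrix_rpartial k (matrix_rpartial l (hess_metric h)) (re_vec z)
          ** matrix_inv (hess_metric h (re_vec z)))) / 4)"
proof -
  let ?I = "matrix_inv (hess_metric h (re_vec z))"
  let ?P = "matrix_rpartial k (hess_metric h) (re_vec z) ** ?I ** matrix_rpartial l (hess_metric h) (re_vec z)"
  let ?H = "matrix_rpartial k (matrix_rpartial l (hess_metric h)) (re_vec z)"
  have "matrix_inv (kahler_coeff h z) = map_matrix of_real ?I"
    using matrix_inv_map_matrix_of_real[OF assms(4)] by (simp add: kahler_coeff_def map_matrix_def)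
  then have "kahler_ricci (kahler_coeff h) k l z
      = complex_of_real (\<Sum>a\<in>UNIV. \<Sum>b\<in>UNIV. ?I $ b $ a * ((?P $ a $ b - ?H $ a $ b) / 4))"
    unfolding kahler_ricci_def kahler_curv_kahler_coeff[OF assms] by (simp add: of_real_sum)
  also have "(\<Sum>a\<in>UNIV. \<Sum>b\<in>UNIV. ?I $ b $ a * ((?P $ a $ b - ?H $ a $ b) / 4))
      = (trace (?P ** ?I) - trace (?H ** ?I)) / 4"
    by (simp add: trace_mult_eq_sum sum_subtractf diff_divide_distrib sum_divide_distrib
        right_diff_distrib mult.commute)
  finally show ?thesis .
qed

theorem proposition9:
  fixes h :: "real^'q::finite \<Rightarrow> real" and U :: "(real^'q) set"
  assumes "open U"
    and "smooth_on U h"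
    and "\<forall>y\<in>U. pos_def (hess_metric h y)"
    and "y \<in> U"
  shows "kahler_ricci (kahler_coeff h) i j (cvec y \<xi>)
           = - (1/2) * complex_of_real (koszul_beta h i j y)"
proof -
  let ?G = "hess_metric h" and ?I = "matrix_inv (hess_metric h y)"
  let ?Di = "matrix_rpartial i ?G y" and ?Dj = "matrix_rpartial j ?G y"
  let ?Dij = "matrix_rpartial i (matrix_rpartial j ?G) y"
  let ?Dji = "matrix_rpartial j (matrix_rpartial i ?G) y"
  have det_nz: "\<forall>x\<in>U. det (?G x) \<noteq> 0"
    using assms(3) pos_def_det_nz by blast
  have "?Dij = ?Dji"
    using assms(1,2,4)
    by (intro matrix_rpartial_commute[of U]) (auto simp: hess_metric_nth intro: smooth_on_rpartial)
  moreover have "trace (?Di ** ?I ** ?Dj ** ?I) = trace (?I ** ?Dj ** ?I ** ?Di)"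
    by (rule trace_mult_rotate[symmetric])
  moreover have "trace (?Dji ** ?I) = trace (?I ** ?Dji)"
    by (rule trace_mul_sym)
  ultimately have "kahler_ricci (kahler_coeff h) i j (cvec y \<xi>)
      = complex_of_real ((trace (?I ** ?Dj ** ?I ** ?Di) - trace (?I ** ?Dji)) / 4)"
    using kahler_ricci_kahler_coeff[OF assms(1,2), of "cvec y \<xi>" i j] det_nz assms(4)
    by (simp add: re_vec_cvec)
  also have "\<dots> = complex_of_real (- (1/2) * koszul_beta h i j y)"
    by (rule arg_cong[where f = complex_of_real])
      (simp add: koszul_beta_hess_metric[OF assms(1,2) det_nz assms(4)] field_simps)
  finally show ?thesis
    by simp
qed

end
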